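(* For every integer $n\ge3$, \[ \sum_{k=3}^{n}(-1)^{k-1}{n\brace k}(k-1)!\left[(H_{k-1})^2-H^{(2)}_{k-1}\right]H_k=\frac{n^2+2}{3}\,B_{n-3}. \]
   Context: $B_m$ is the $m$th Bernoulli number ($\frac{t}{e^t-1}=\sum_{m\ge0}B_m\frac{t^m}{m!}$). ${n\brace k}$ is the Stirling number of the second kind. $H_k=\sum_{i=1}^k 1/i$ and $H_k^{(2)}=\sum_{i=1}^k 1/i^2$. *)

theory Defs
  imports "HOL-Analysis.Analysis" "HOL-Computational_Algebra.Formal_Power_Series" "HOL-Combinatorics.Stirling"
begin

definition bernoulli_num :: "nat \<Rightarrow> real" where
  "bernoulli_num m = fact m * fps_nth (fps_X / (fps_exp 1 - 1)) m"

definition harm2 :: "nat \<Rightarrow> real" where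
  "harm2 k = (\<Sum>i=1..k. 1 / (real i)^2)"

end

(*
  Since k! (H_k^2 - H_k^(2)) = 2 [k+1, 3] (unsigned Stirling numbers of the first kind), the sum
  is -2 T_n, where T_n = sum_k (-1)^k {n, k} c_k is the alternating Stirling transform of
  c_k = [k, 3] H_k.  The recurrence {n+1, k} = k {n, k} + {n, k-1} turns the transform of c at
  n+1 into the transform of k c_k - c_(k+1) at n; with H_(k+1) = H_k + 1/(k+1) this lowers m in
  c_k = [k, m] H_k by one, at the cost of the transform of [k+1, m]/(k+1).  That transform is
  (-1)^(m+1)/m C(n, m-1) B_(n-m+1): binomial transforms are injective, and via
  sum_i C(n, i) {i, k} = (k+1) {n, k+1} and the orthogonality of the two kinds of Stirling
  numbers both sides have the binomial transform -(-1)^m [n = m].  Unrolling the recurrence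
  from m = 0 gives T at n = p + m in closed form, and the case m = 3 is the theorem.
*)
theory Submission
  imports Defs
begin

definition Stirling_transform :: "(nat \<Rightarrow> 'a::comm_ring_1) \<Rightarrow> nat \<Rightarrow> 'a" where
  "Stirling_transform c n = (\<Sum>k\<le>n. (-1)^k * of_nat (Stirling n k) * c k)"

lemma Stirling_transform_Suc:
  "Stirling_transform c (Suc n) = Stirling_transform (\<lambda>k. of_nat k * c k - c (Suc k)) n"
proof -
  have "Stirling_transform c (Suc n)
      = (\<Sum>k\<le>n. (-1)^Suc k * of_nat (Stirling (Suc n) (Suc k)) * c (Suc k))"
    unfolding Stirling_transform_def by (subst sum.atMost_Suc_shift) simp
  also have "\<dots> = (\<Sum>k\<le>n. (-1)^Suc k * of_nat (Suc k * Stirling n (Suc k)) * c (Suc k))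
                 + (\<Sum>k\<le>n. (-1)^Suc k * of_nat (Stirling n k) * c (Suc k))"
    by (simp add: sum.distrib[symmetric] algebra_simps)
  also have "(\<Sum>k\<le>n. (-1)^Suc k * of_nat (Suc k * Stirling n (Suc k)) * c (Suc k))
           = (\<Sum>k\<le>n. (-1)^k * of_nat (k * Stirling n k) * c k)"
    using sum.atMost_Suc_shift[of "\<lambda>k. (-1)^k * of_nat (k * Stirling n k) * c k" n] by simp
  finally show ?thesis
    unfolding Stirling_transform_def by (simp add: sum.distrib[symmetric] algebra_simps)
qed

lemma Stirling_transform_diff:
  "Stirling_transform (\<lambda>k. f k - g k) n = Stirling_transform f n - Stirling_transform g n"
  unfolding Stirling_transform_def by (simp add: sum_subtractf algebra_simps)

lemma Stirling_transform_uminus: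
  "Stirling_transform (\<lambda>k. - f k) n = - Stirling_transform f n"
  unfolding Stirling_transform_def by (simp add: sum_negf)

lemma Stirling_transform_stirling:
  "Stirling_transform (\<lambda>k. of_nat (stirling k m)) n = (if n = m then (-1)^m else 0)"
proof (induction n arbitrary: m)
  case 0
  then show ?case by (simp add: Stirling_transform_def)
next
  case (Suc n)
  show ?case
  proof (cases m)
    case 0
    have "of_nat (Stirling (Suc n) k) * of_nat (stirling k 0) = (0::'a)" for k
      by (cases k) simp_all
    then show ?thesis
      using 0 by (simp add: Stirling_transform_def mult.assoc)
  next
    case (Suc m')
    have body: "of_nat k * of_nat (stirling k m) - of_nat (stirling (Suc k) m)
        = - (of_nat (stirling k m') :: 'a)" for k
      using Suc by simp
    have "Stirling_transform (\<lambda>k. of_nat (stirling k m)) (Suc n)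
        = - Stirling_transform (\<lambda>k. of_nat (stirling k m') :: 'a) n"
      unfolding Stirling_transform_Suc body Stirling_transform_uminus ..
    also have "\<dots> = (if Suc n = m then (-1)^m else 0)"
      unfolding Suc.IH using Suc by simp
    finally show ?thesis .
  qed
qed

lemma sum_choose_Stirling_eq_Stirling_Suc:
  "(\<Sum>i\<le>n. (n choose i) * Stirling i k) = Stirling (Suc n) (Suc k)"
proof (induction n arbitrary: k)
  case 0
  then show ?case by (cases k) simp_all
next
  case (Suc n)
  have "(\<Sum>i\<le>Suc n. (Suc n choose i) * Stirling i k)
      = (Stirling 0 k + (\<Sum>i\<le>n. (n choose Suc i) * Stirling (Suc i) k))
        + (\<Sum>i\<le>n. (n choose i) * Stirling (Suc i) k)"
    by (subst sum.atMost_Suc_shift) (simp add: sum.distrib algebra_simps)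
  also have "Stirling 0 k + (\<Sum>i\<le>n. (n choose Suc i) * Stirling (Suc i) k)
      = (\<Sum>i\<le>Suc n. (n choose i) * Stirling i k)"
    unfolding sum.atMost_Suc_shift by simp
  also have "(\<Sum>i\<le>Suc n. (n choose i) * Stirling i k) = Stirling (Suc n) (Suc k)"
    using Suc.IH by simp
  also have "(\<Sum>i\<le>n. (n choose i) * Stirling (Suc i) k) = (case k of 0 \<Rightarrow> 0 | Suc k' \<Rightarrow>
      Suc k' * (\<Sum>i\<le>n. (n choose i) * Stirling i (Suc k')) + (\<Sum>i\<le>n. (n choose i) * Stirling i k'))"
    by (cases k) (simp_all add: sum.distrib sum_distrib_left algebra_simps)
  finally show ?case by (cases k) (simp_all add: Suc.IH)
qed

lemma sum_choose_Stirling: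
  "(\<Sum>i<n. (n choose i) * Stirling i k) = Suc k * Stirling n (Suc k)"
  using sum_choose_Stirling_eq_Stirling_Suc[of n k] by (simp add: lessThan_Suc_atMost[symmetric])

lemma sum_choose_Stirling_transform:
  "(\<Sum>i<n. of_nat (n choose i) * Stirling_transform c i)
     = - Stirling_transform (\<lambda>k. of_nat k * c (k - 1)) n"
proof -
  have "(\<Sum>i<n. of_nat (n choose i) * Stirling_transform c i)
      = (\<Sum>i<n. \<Sum>k<n. of_nat (n choose i) * ((-1)^k * of_nat (Stirling i k) * c k))"
    unfolding Stirling_transform_def sum_distrib_left
    by (intro sum.cong refl sum.mono_neutral_left) auto
  also have "\<dots> = (\<Sum>k<n. (-1)^k * c k * of_nat (\<Sum>i<n. (n choose i) * Stirling i k))"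
    by (subst sum.swap) (simp add: sum_distrib_left algebra_simps)
  also have "\<dots> = - (\<Sum>k<n. (-1)^Suc k * of_nat (Stirling n (Suc k)) * (of_nat (Suc k) * c k))"
    by (simp add: sum_choose_Stirling sum_negf[symmetric] algebra_simps)
  also have "\<dots> = - Stirling_transform (\<lambda>k. of_nat k * c (k - 1)) n"
    unfolding Stirling_transform_def lessThan_Suc_atMost[symmetric] sum.lessThan_Suc_shift
    by simp
  finally show ?thesis .
qed

lemma sum_choose_eq_imp_eq:
  fixes a b :: "nat \<Rightarrow> 'a::{idom, ring_char_0}"
  assumes "\<And>n. (\<Sum>i<n. of_nat (n choose i) * a i) = (\<Sum>i<n. of_nat (n choose i) * b i)"
  shows "a n = b n"
proof (induction n rule: less_induct)
  case (less n)
  have "(\<Sum>i<n. of_nat (Suc n choose i) * a i) = (\<Sum>i<n. of_nat (Suc n choose i) * b i)"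
    using less by simp
  with assms[of "Suc n"] have "of_nat (Suc n) * a n = of_nat (Suc n) * b n"
    by simp
  then show ?case by (simp del: of_nat_Suc)
qed

lemma bernoulli_num_recurrence:
  "(\<Sum>i<n. real (n choose i) * bernoulli_num i) = (if n = 1 then 1 else 0)"
proof -
  define E :: "real fps" where "E = fps_exp 1 - 1"
  have E_nth: "fps_nth E k = (if k = 0 then 0 else 1 / fact k)" for k
    by (simp add: E_def)
  have "subdegree E = 1"
    by (rule subdegreeI) (simp_all add: E_nth)
  then have "fps_X / E * E = fps_X"
    by (intro fps_times_divide_eq) auto
  then have "fps_nth fps_X n = (\<Sum>i\<le>n. fps_nth (fps_X / E) i * fps_nth E (n - i))"
    by (metis fps_mult_nth atLeast0AtMost)
  also have "\<dots> = (\<Sum>i<n. bernoulli_num i / fact i / fact (n - i))"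
    by (simp add: lessThan_Suc_atMost[symmetric] E_nth bernoulli_num_def E_def)
  finally have recurrence: "(\<Sum>i<n. bernoulli_num i / fact i / fact (n - i)) = (if n = 1 then 1 else 0)"
    by simp
  have "(\<Sum>i<n. real (n choose i) * bernoulli_num i)
      = fact n * (\<Sum>i<n. bernoulli_num i / fact i / fact (n - i))"
    unfolding sum_distrib_left by (intro sum.cong refl) (simp add: binomial_fact field_simps)
  then show ?thesis
    using recurrence by simp
qed

lemma sum_choose_choose_bernoulli:
  "(\<Sum>i<n. real (n choose i) * real (i choose j) * bernoulli_num (i - j))
     = (if n = Suc j then real n else 0)"
proof (cases "j < n")
  case False
  then show ?thesis
    by (auto intro!: sum.neutral)
next
  case True
  have "(\<Sum>i<n. real (n choose i) * real (i choose j) * bernoulli_num (i - j))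
      = (\<Sum>i\<in>{j..<n}. real (n choose j) * (real ((n - j) choose (i - j)) * bernoulli_num (i - j)))"
  proof (rule sum.mono_neutral_cong_right)
    fix i assume "i \<in> {j..<n}"
    then have "(n choose i) * (i choose j) = (n choose j) * ((n - j) choose (i - j))"
      by (intro choose_mult) auto
    then show "real (n choose i) * real (i choose j) * bernoulli_num (i - j)
        = real (n choose j) * (real ((n - j) choose (i - j)) * bernoulli_num (i - j))"
      by (metis mult.assoc of_nat_mult)
  qed auto
  also have "\<dots> = real (n choose j) * (\<Sum>l<n - j. real ((n - j) choose l) * bernoulli_num l)"
    by (simp add: sum.atLeastLessThan_shift_0[of _ j] atLeast0LessThan sum_distrib_left)
  also have "\<dots> = (if n = Suc j then real n else 0)"
    using True by (auto simp: bernoulli_num_recurrence)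
  finally show ?thesis .
qed

lemma Stirling_transform_stirling_Suc_div_Suc:
  assumes "m \<ge> 1"
  shows "Stirling_transform (\<lambda>k. real (stirling (Suc k) m) / real (Suc k)) n
           = (-1)^Suc m / real m * real (n choose (m - 1)) * bernoulli_num (n - (m - 1))"
proof -
  define c where "c = (\<lambda>k. real (stirling (Suc k) m) / real (Suc k))"
  define b where "b = (\<lambda>n. (-1)^Suc m / real m * real (n choose (m - 1)) * bernoulli_num (n - (m - 1)))"
  have "(\<Sum>i<n. real (n choose i) * Stirling_transform c i) = (\<Sum>i<n. real (n choose i) * b i)" for n
  proof -
    have "of_nat k * c (k - 1) = real (stirling k m)" for k
      using assms by (cases k) (auto simp: c_def)
    then have "(\<Sum>i<n. real (n choose i) * Stirling_transform c i) = - (if n = m then (-1)^m else 0)"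
      by (simp add: sum_choose_Stirling_transform Stirling_transform_stirling)
    also have "\<dots> = (-1)^Suc m / real m
        * (\<Sum>i<n. real (n choose i) * real (i choose (m - 1)) * bernoulli_num (i - (m - 1)))"
      using assms by (subst sum_choose_choose_bernoulli) auto
    also have "\<dots> = (\<Sum>i<n. real (n choose i) * b i)"
      by (simp add: b_def sum_distrib_left algebra_simps)
    finally show ?thesis .
  qed
  then have "Stirling_transform c n = b n"
    by (rule sum_choose_eq_imp_eq)
  then show ?thesis
    by (simp only: c_def b_def)
qed

lemma Stirling_transform_stirling_harm_Suc:
  "Stirling_transform (\<lambda>k. real (stirling k (Suc m)) * harm k) (Suc n)
     = - Stirling_transform (\<lambda>k. real (stirling k m) * harm k) n
       - Stirling_transform (\<lambda>k. real (stirling (Suc k) (Suc m)) / real (Suc k)) n"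
proof -
  have body: "real k * (real (stirling k (Suc m)) * harm k) - real (stirling (Suc k) (Suc m)) * harm (Suc k)
      = - (real (stirling k m) * harm k) - real (stirling (Suc k) (Suc m)) / real (Suc k)" for k
    by (simp add: harm_Suc field_simps del: of_nat_Suc)
  show ?thesis
    unfolding Stirling_transform_Suc body
    by (simp only: Stirling_transform_diff Stirling_transform_uminus)
qed

lemma Stirling_transform_stirling_harm:
  "Stirling_transform (\<lambda>k. real (stirling k m) * harm k) (p + m)
     = (-1)^m * bernoulli_num p * (\<Sum>i<m. real (p + i choose i) / real (Suc i))"
proof (induction m)
  case 0
  have "real (stirling k 0) * harm k = 0" for k
    by (cases k) (simp_all add: harm_def)
  then have "Stirling_transform (\<lambda>k. real (stirling k 0) * harm k) p = 0"
    unfolding Stirling_transform_def by (simp only: mult_zero_right sum.neutral_const)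
  then show ?case
    by simp
next
  case (Suc m)
  have "Stirling_transform (\<lambda>k. real (stirling k (Suc m)) * harm k) (p + Suc m)
      = - Stirling_transform (\<lambda>k. real (stirling k m) * harm k) (p + m)
        - Stirling_transform (\<lambda>k. real (stirling (Suc k) (Suc m)) / real (Suc k)) (p + m)"
    using Stirling_transform_stirling_harm_Suc[of m "p + m"] by simp
  also have "\<dots> = - ((-1)^m * bernoulli_num p * (\<Sum>i<m. real (p + i choose i) / real (Suc i)))
        - (-1)^Suc (Suc m) / real (Suc m) * real (p + m choose m) * bernoulli_num p"
    unfolding Suc.IH using Stirling_transform_stirling_Suc_div_Suc[of "Suc m" "p + m"] by simp
  also have "\<dots> = (-1)^Suc m * bernoulli_num p * (\<Sum>i<Suc m. real (p + i choose i) / real (Suc i))"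
    by (simp add: algebra_simps)
  finally show ?case .
qed

lemma stirling_Suc_n_2_harm: "real (stirling (Suc n) 2) = fact n * harm n"
  by (cases "n = 0") (simp_all add: of_nat_stirling_Suc_n_2 harm_def divide_inverse)

lemma stirling_Suc_n_3_harm: "2 * real (stirling (Suc n) 3) = fact n * ((harm n)^2 - harm2 n)"
proof (induction n)
  case 0
  then show ?case by (simp add: harm_def harm2_def numeral_3_eq_3)
next
  case (Suc n)
  have rec: "stirling (Suc (Suc n)) 3 = Suc n * stirling (Suc n) 3 + stirling (Suc n) 2"
    using stirling.simps(4)[of "Suc n" 2] by (simp del: stirling.simps)
  have "2 * real (stirling (Suc (Suc n)) 3)
      = real (Suc n) * (2 * real (stirling (Suc n) 3)) + 2 * real (stirling (Suc n) 2)"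
    unfolding rec by (simp add: algebra_simps)
  also have "\<dots> = real (Suc n) * (fact n * ((harm n)^2 - harm2 n)) + 2 * (fact n * harm n)"
    by (simp only: Suc.IH stirling_Suc_n_2_harm)
  also have "\<dots> = fact (Suc n) * ((harm (Suc n))^2 - harm2 (Suc n))"
    by (simp add: harm_Suc harm2_def field_simps power2_eq_square del: of_nat_Suc)
  finally show ?case .
qed

lemma sum_Stirling_harm_eq_Stirling_transform:
  "(\<Sum>k=3..n. (-1::real)^(k-1) * real (Stirling n k) * fact (k-1)
       * ((harm (k-1))^2 - harm2 (k-1)) * harm k)
     = -2 * Stirling_transform (\<lambda>k. real (stirling k 3) * harm k) n"
proof -
  have summand: "(-1::real)^(k-1) * real (Stirling n k) * fact (k-1)
        * ((harm (k-1))^2 - harm2 (k-1)) * harm k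
      = -2 * ((-1)^k * real (Stirling n k) * (real (stirling k 3) * harm k))" if "k \<ge> 1" for k
  proof -
    obtain j where k: "k = Suc j"
      using \<open>k \<ge> 1\<close> by (cases k) auto
    have "-2 * ((-1)^k * real (Stirling n k) * (real (stirling k 3) * harm k))
        = (-1::real)^j * real (Stirling n k) * (2 * real (stirling (Suc j) 3)) * harm k"
      by (simp add: k algebra_simps)
    also have "\<dots> = (-1::real)^(k-1) * real (Stirling n k) * fact (k-1)
        * ((harm (k-1))^2 - harm2 (k-1)) * harm k"
      unfolding stirling_Suc_n_3_harm by (simp add: k mult.assoc)
    finally show ?thesis ..
  qed
  then have "(\<Sum>k=3..n. (-1::real)^(k-1) * real (Stirling n k) * fact (k-1)
       * ((harm (k-1))^2 - harm2 (k-1)) * harm k)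
      = -2 * (\<Sum>k=3..n. (-1)^k * real (Stirling n k) * (real (stirling k 3) * harm k))"
    by (simp add: sum_distrib_left)
  also have "\<dots> = -2 * Stirling_transform (\<lambda>k. real (stirling k 3) * harm k) n"
    unfolding Stirling_transform_def by (intro arg_cong[where f = "(*) (-2)"] sum.mono_neutral_left) auto
  finally show ?thesis .
qed

theorem mainTheorem3:
  fixes n :: nat
  assumes "n \<ge> 3"
  shows "(\<Sum>k=3..n. (-1::real)^(k-1) * real (Stirling n k) * fact (k-1)
            * ((harm (k-1))^2 - harm2 (k-1)) * harm k)
         = (real n ^ 2 + 2) / 3 * bernoulli_num (n-3)"
proof -
  obtain p where n: "n = p + 3"
    using assms by (metis add.commute le_Suc_ex)
  have "-2 * Stirling_transform (\<lambda>k. real (stirling k 3) * harm k) (p + 3)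
      = 2 * bernoulli_num p * (\<Sum>i<3. real (p + i choose i) / real (Suc i))"
    by (simp add: Stirling_transform_stirling_harm)
  also have "\<dots> = (real n ^ 2 + 2) / 3 * bernoulli_num (n-3)"
    by (simp add: n numeral_3_eq_3 binomial_gbinomial gbinomial_prod_rev field_simps power2_eq_square)
  finally show ?thesis
    unfolding sum_Stirling_harm_eq_Stirling_transform n .
qed

end
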